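(* Let $h$ be a hospital whose utility is proportional to total wage, i.e. $f_h(Y)=\gamma_h w_h(Y)$ for all $Y\subseteq X_h$ for some $\gamma_h>0$. Define $\mathrm{Ch}_h:2^{X_h}\to2^{X_h}$ as follows: given $X'\subseteq X_h$ (with $\mathrm{Ch}_h(\emptyset)=\emptyset$), sort $X'$ in non-decreasing order of wage (ties broken by a fixed order) as $x^{(1)},\dots,x^{(|X'|)}$; set $Y=\{x^{(|X'|)}\}$; for $i=1,\dots,|X'|-1$ add $x^{(i)}$ to $Y$ if $w_h(Y\cup\{x^{(i)}\})<1.5\,B_h$; return $Y$. Then $\mathrm{Ch}_h$ satisfies SUB, IRC and COM.
   Context: Hospital $h$ has a finite set $X_h$ of contracts $x$ with wages $x_W$, $0<x_W\le B_h$, where $B_h>0$ is its budget. $w_h(Y)=\sum_{x\in Y}x_W$ for $Y\subseteq X_h$. For $\mathrm{Ch}_h$ with $\mathrm{Ch}_h(Y)\subseteq Y$: SUB means for all $Y''\subseteq Y'\subseteq X_h$, $Y''\setminus\mathrm{Ch}_h(Y'')\subseteq Y'\setminus\mathrm{Ch}_h(Y')$; IRC means for $Y'\subseteq X_h$, $Y''\subseteq X_h\setminus Y'$, if $\mathrm{Ch}_h(Y'\cup Y'')\subseteq Y'$ then $\mathrm{Ch}_h(Y')=\mathrm{Ch}_h(Y'\cup Y'')$; COM means for all $Y''\subseteq Y'\subseteq X_h$ with $w_h(Y'')\le\max\{B_h,w_h(\mathrm{Ch}_h(Y'))\}$, $f_h(\mathrm{Ch}_h(Y'))\ge f_h(Y'')$.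 *)

theory Defs
  imports Complex_Main "HOL-Library.Product_Lexorder"
begin

text \<open>Contracts have type 'a; the type's linear order is the fixed tie-breaking order.
  w x is the wage of contract x.\<close>

definition wsum :: "('a \<Rightarrow> real) \<Rightarrow> 'a set \<Rightarrow> real" where
  "wsum w Y = (\<Sum>x\<in>Y. w x)"

fun greedy :: "('a \<Rightarrow> real) \<Rightarrow> real \<Rightarrow> 'a set \<Rightarrow> 'a list \<Rightarrow> 'a set" where
  "greedy w B Y [] = Y"
| "greedy w B Y (x # xs) =
     greedy w B (if wsum w (Y \<union> {x}) < 3/2 * B then Y \<union> {x} else Y) xs"

definition sorted_by_wage :: "('a::linorder \<Rightarrow> real) \<Rightarrow> 'a set \<Rightarrow> 'a list" where
  "sorted_by_wage w X' = sort_key (\<lambda>x. (w x, x)) (sorted_list_of_set X')"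

definition ch :: "('a::linorder \<Rightarrow> real) \<Rightarrow> real \<Rightarrow> 'a set \<Rightarrow> 'a set" where
  "ch w B X' = (if X' = {} then {}
     else (let xs = sorted_by_wage w X' in greedy w B {last xs} (butlast xs)))"

definition SUB :: "'a set \<Rightarrow> ('a set \<Rightarrow> 'a set) \<Rightarrow> bool" where
  "SUB X C = (\<forall>Y' Y''. Y'' \<subseteq> Y' \<and> Y' \<subseteq> X \<longrightarrow> Y'' - C Y'' \<subseteq> Y' - C Y')"

definition IRC :: "'a set \<Rightarrow> ('a set \<Rightarrow> 'a set) \<Rightarrow> bool" where
  "IRC X C = (\<forall>Y' Y''. Y' \<subseteq> X \<and> Y'' \<subseteq> X - Y' \<and> C (Y' \<union> Y'') \<subseteq> Y'
       \<longrightarrow> C Y' = C (Y' \<union> Y''))"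

definition COM :: "'a set \<Rightarrow> real \<Rightarrow> ('a \<Rightarrow> real) \<Rightarrow> ('a set \<Rightarrow> real) \<Rightarrow> ('a set \<Rightarrow> 'a set) \<Rightarrow> bool" where
  "COM X B w f C = (\<forall>Y' Y''. Y'' \<subseteq> Y' \<and> Y' \<subseteq> X \<and> wsum w Y'' \<le> max B (wsum w (C Y'))
       \<longrightarrow> f (C Y') \<ge> f Y'')"

end

theory Submission
  imports Defs
begin

text \<open>Rank contracts by (wage, contract), the order in which Ch scans them, and let t be the
  top contract. Since wages are non-negative and non-decreasing along the scan, once a contract
  is rejected all later ones are too, so Ch accepts t and exactly those x for which w t plus
  the total wage of the contracts ranked at most x stays below 1.5 B.

  SUB: enlarging the menu can only raise both w t and these prefix sums. IRC: removing one
  rejected contract z does not change any test: contracts ranked below z see the same prefix,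
  and any x ranked above z still carries at least the prefix weight of z (with w x \<ge> w z in
  place of z). COM: if Ch rejects something while its total wage is below B, the lowest-ranked
  rejected contract z fails the test although everything ranked below it was accepted, which
  forces w z > B/2. Hence every contract of wage at most B/2 is accepted, and a set of total
  wage at most B contains at most one heavier contract, whose wage is at most w t.\<close>

definition rank :: "('a \<Rightarrow> real) \<Rightarrow> 'a \<Rightarrow> real \<times> 'a" where
  "rank w x = (w x, x)"

definition rank_prefix :: "('a::linorder \<Rightarrow> real) \<Rightarrow> 'a set \<Rightarrow> 'a \<Rightarrow> 'a set" where
  "rank_prefix w Y x = {y \<in> Y. rank w y \<le> rank w x}"

definition rank_max :: "('a::linorder \<Rightarrow> real) \<Rightarrow> 'a set \<Rightarrow> 'a \<Rightarrow> bool" where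
  "rank_max w Y t \<longleftrightarrow> t \<in> Y \<and> (\<forall>y\<in>Y. rank w y \<le> rank w t)"

lemma rank_eq_iff [simp]: "rank w x = rank w y \<longleftrightarrow> x = y"
  by (auto simp: rank_def)

lemma wage_le_if_rank_le: "rank w x \<le> rank w y \<Longrightarrow> w x \<le> w y"
  by (auto simp: rank_def less_eq_prod_def)

lemma rank_less_if_wage_less: "w x < w y \<Longrightarrow> rank w x < rank w y"
  by (auto simp: rank_def less_prod_def less_eq_prod_def)

lemma ex_rank_max:
  fixes w :: "'a::linorder \<Rightarrow> real"
  assumes "finite Y" "Y \<noteq> {}"
  obtains t where "rank_max w Y t"
proof -
  obtain t where "t \<in> Y" "rank w t = Max (rank w ` Y)"
    using Max_in[of "rank w ` Y"] assms by (auto simp del: Max_in)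
  then have "rank_max w Y t"
    using assms by (auto simp: rank_max_def intro!: Max_ge)
  then show ?thesis ..
qed

lemma ex_rank_min:
  fixes w :: "'a::linorder \<Rightarrow> real"
  assumes "finite Y" "Y \<noteq> {}"
  obtains z where "z \<in> Y" "\<forall>y\<in>Y. rank w z \<le> rank w y"
proof -
  obtain z where "z \<in> Y" "rank w z = Min (rank w ` Y)"
    using Min_in[of "rank w ` Y"] assms by (auto simp del: Min_in)
  then have "\<forall>y\<in>Y. rank w z \<le> rank w y"
    using assms by (auto intro!: Min_le)
  then show ?thesis
    using that \<open>z \<in> Y\<close> by blast
qed

lemma rank_max_unique:
  "rank_max w Y t \<Longrightarrow> rank_max w Y t' \<Longrightarrow> t = t'"
  by (metis rank_max_def order_antisym rank_eq_iff)

lemma wsum_insert: "finite Y \<Longrightarrow> x \<notin> Y \<Longrightarrow> wsum w (insert x Y) = w x + wsum w Y"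
  by (simp add: wsum_def)

lemma wsum_remove: "finite Y \<Longrightarrow> x \<in> Y \<Longrightarrow> wsum w Y = w x + wsum w (Y - {x})"
  by (simp add: wsum_def sum.remove)

lemma wsum_mono:
  assumes "finite Y" "Y' \<subseteq> Y" "\<forall>y\<in>Y. 0 \<le> w y"
  shows "wsum w Y' \<le> wsum w Y"
  unfolding wsum_def using assms by (intro sum_mono2) auto

lemma rank_prefix_subset: "rank_prefix w Y x \<subseteq> Y"
  by (auto simp: rank_prefix_def)

lemma self_in_rank_prefix: "x \<in> Y \<Longrightarrow> x \<in> rank_prefix w Y x"
  by (simp add: rank_prefix_def)

lemma greedy_rank_sorted:
  fixes w :: "'a::linorder \<Rightarrow> real"
  assumes "finite Y" "sorted_wrt (\<lambda>x y. rank w x < rank w y) xs" "set xs \<inter> Y = {}"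
    "\<forall>y\<in>Y \<union> set xs. 0 \<le> w y"
  shows "greedy w B Y xs = Y \<union> {x \<in> set xs. wsum w (Y \<union> rank_prefix w (set xs) x) < 3/2 * B}"
  using assms
proof (induction xs arbitrary: Y)
  case Nil
  then show ?case by simp
next
  case (Cons x xs)
  have x_first: "\<forall>z\<in>set xs. rank w x < rank w z"
    using Cons.prems(2) by simp
  have prefix_x: "rank_prefix w (set (x # xs)) x = {x}"
    using x_first by (auto simp: rank_prefix_def not_le[symmetric])
  have prefix_z: "rank_prefix w (set (x # xs)) z = insert x (rank_prefix w (set xs) z)"
    if "z \<in> set xs" for z
    using x_first that by (auto simp: rank_prefix_def intro: less_imp_le)
  show ?case
  proof (cases "wsum w (Y \<union> {x}) < 3/2 * B")
    case True
    have "greedy w B (Y \<union> {x}) xs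
        = Y \<union> {x} \<union> {z \<in> set xs. wsum w (Y \<union> {x} \<union> rank_prefix w (set xs) z) < 3/2 * B}"
      using Cons.prems by (intro Cons.IH) auto
    then show ?thesis
      using True prefix_x prefix_z by auto
  next
    case False
    have x_notin: "x \<notin> Y"
      using Cons.prems(3) by auto
    \<comment> \<open>every later contract weighs at least as much as the rejected x, so it is rejected too\<close>
    have rejected: "3/2 * B \<le> wsum w (Y \<union> S)"
      if "z \<in> S" "S \<subseteq> set (x # xs)" for z S
    proof -
      have z: "z \<in> set (x # xs)" "z \<notin> Y"
        using that Cons.prems(3) by auto
      have "w x \<le> w z"
        using z(1) x_first by (auto intro: wage_le_if_rank_le less_imp_le)
      have "3/2 * B \<le> wsum w (insert x Y)"
        using False by simp
      also have "\<dots> \<le> wsum w (insert z Y)"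
        using \<open>w x \<le> w z\<close> x_notin z(2) Cons.prems(1) by (simp add: wsum_insert)
      also have "\<dots> \<le> wsum w (Y \<union> S)"
        using that Cons.prems(1,4) finite_subset[of S "set (x # xs)"]
        by (intro wsum_mono) auto
      finally show ?thesis .
    qed
    have "greedy w B Y xs = Y \<union> {z \<in> set xs. wsum w (Y \<union> rank_prefix w (set xs) z) < 3/2 * B}"
      using Cons.prems by (intro Cons.IH) auto
    also have "\<dots> = Y"
      using rejected[OF self_in_rank_prefix, of _ "set xs" w] rank_prefix_subset[of w "set xs"]
      by (fastforce simp: not_less[symmetric])
    finally show ?thesis
      using False rejected[OF self_in_rank_prefix rank_prefix_subset, of _ w]
      by (auto simp: not_less[symmetric])
  qed
qed

lemma sorted_by_wage_rank_sorted:
  fixes w :: "'a::linorder \<Rightarrow> real"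
  assumes "finite Y"
  shows "set (sorted_by_wage w Y) = Y"
    and "sorted_wrt (\<lambda>x y. rank w x < rank w y) (sorted_by_wage w Y)"
proof -
  define xs where "xs = sorted_by_wage w Y"
  have xs: "xs = sort_key (rank w) (sorted_list_of_set Y)"
    unfolding xs_def sorted_by_wage_def rank_def by simp
  then show "set (sorted_by_wage w Y) = Y"
    using assms by (simp add: xs_def)
  have "sorted (map (rank w) xs)"
    unfolding xs by (rule sorted_sort_key)
  moreover have "distinct (map (rank w) xs)"
    using assms by (simp add: xs distinct_map inj_on_def)
  ultimately have "sorted_wrt (<) (map (rank w) xs)"
    by (simp add: strict_sorted_iff)
  then show "sorted_wrt (\<lambda>x y. rank w x < rank w y) (sorted_by_wage w Y)"
    by (simp add: xs_def sorted_wrt_map)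
qed

lemma mem_ch_iff:
  fixes w :: "'a::linorder \<Rightarrow> real"
  assumes "finite Y" "rank_max w Y t" "\<forall>y\<in>Y. 0 \<le> w y"
  shows "x \<in> ch w B Y \<longleftrightarrow> x = t \<or> x \<in> Y \<and> w t + wsum w (rank_prefix w Y x) < 3/2 * B"
proof -
  define xs where "xs = sorted_by_wage w Y"
  have set_xs: "set xs = Y" and sorted: "sorted_wrt (\<lambda>x y. rank w x < rank w y) xs"
    using sorted_by_wage_rank_sorted[OF assms(1)] by (simp_all add: xs_def)
  have "Y \<noteq> {}"
    using assms(2) by (auto simp: rank_max_def)
  then have "xs \<noteq> []"
    using set_xs by auto
  then have split: "xs = butlast xs @ [last xs]"
    by simp
  have Y_split: "Y = insert (last xs) (set (butlast xs))"
    using \<open>xs \<noteq> []\<close> set_xs by (cases xs rule: rev_cases) auto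
  have below_last: "\<forall>y\<in>set (butlast xs). rank w y < rank w (last xs)"
    using sorted split by (metis list.set_intros(1) sorted_wrt_append)
  have sorted_butlast: "sorted_wrt (\<lambda>x y. rank w x < rank w y) (butlast xs)"
    using sorted split by (metis sorted_wrt_append)
  have "rank_max w Y (last xs)"
    using below_last Y_split by (auto simp: rank_max_def less_imp_le)
  then have last: "last xs = t"
    using assms(2) by (rule rank_max_unique)
  have rest: "set (butlast xs) = Y - {t}"
    using below_last Y_split last by auto
  have "ch w B Y = greedy w B {t} (butlast xs)"
    using \<open>Y \<noteq> {}\<close> last by (simp add: ch_def xs_def[symmetric] Let_def)
  also have "\<dots> = {t} \<union> {x \<in> Y - {t}. wsum w ({t} \<union> rank_prefix w (Y - {t}) x) < 3/2 * B}"
    using rest sorted_butlast assms(2,3) by (subst greedy_rank_sorted) (auto simp: rank_max_def)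
  finally have ch: "ch w B Y = \<dots>" .
  have "wsum w ({t} \<union> rank_prefix w (Y - {t}) x) = w t + wsum w (rank_prefix w Y x)"
    if "x \<in> Y - {t}" for x
  proof -
    have "rank w x < rank w t"
      using that assms(2) by (auto simp: rank_max_def order_less_le)
    then have "rank_prefix w (Y - {t}) x = rank_prefix w Y x" "t \<notin> rank_prefix w Y x"
      by (auto simp: rank_prefix_def)
    then show ?thesis
      using assms(1) by (simp add: wsum_insert rank_prefix_def)
  qed
  then show ?thesis
    unfolding ch by auto
qed

lemma rank_max_mem_ch:
  fixes w :: "'a::linorder \<Rightarrow> real"
  assumes "finite Y" "rank_max w Y t" "\<forall>y\<in>Y. 0 \<le> w y"
  shows "t \<in> ch w B Y"
  using mem_ch_iff[OF assms] by simp

lemma ch_subset: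
  fixes w :: "'a::linorder \<Rightarrow> real"
  assumes "finite Y" "\<forall>y\<in>Y. 0 \<le> w y"
  shows "ch w B Y \<subseteq> Y"
proof (cases "Y = {}")
  case True
  then show ?thesis by (simp add: ch_def)
next
  case False
  obtain t where "rank_max w Y t"
    using assms(1) False by (rule ex_rank_max)
  then show ?thesis
    using mem_ch_iff[OF assms(1) _ assms(2)] by (auto simp: rank_max_def)
qed

lemma SUB_ch:
  fixes w :: "'a::linorder \<Rightarrow> real"
  assumes "finite X" "\<forall>x\<in>X. 0 \<le> w x"
  shows "SUB X (ch w B)"
  unfolding SUB_def
proof (intro allI impI subsetI)
  fix Y' Y'' x
  assume "Y'' \<subseteq> Y' \<and> Y' \<subseteq> X" and x: "x \<in> Y'' - ch w B Y''"
  then have sub: "Y'' \<subseteq> Y'" and fin: "finite Y'" "finite Y''"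
    and nonneg: "\<forall>y\<in>Y'. 0 \<le> w y" "\<forall>y\<in>Y''. 0 \<le> w y"
    using assms by (auto intro: finite_subset)
  obtain t'' where t'': "rank_max w Y'' t''"
    using x fin(2) ex_rank_max by blast
  obtain t' where t': "rank_max w Y' t'"
    using x sub fin(1) ex_rank_max by blast
  have "x \<noteq> t''" and rejected: "\<not> w t'' + wsum w (rank_prefix w Y'' x) < 3/2 * B"
    using x mem_ch_iff[OF fin(2) t'' nonneg(2)] by auto
  have "rank w x < rank w t''" "rank w t'' \<le> rank w t'"
    using x t'' t' sub \<open>x \<noteq> t''\<close> by (auto simp: rank_max_def order_less_le)
  then have "x \<noteq> t'" and "w t'' \<le> w t'"
    by (auto simp: wage_le_if_rank_le)
  moreover have "wsum w (rank_prefix w Y'' x) \<le> wsum w (rank_prefix w Y' x)"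
    by (rule wsum_mono) (use fin(1) sub nonneg(1) in \<open>auto simp: rank_prefix_def\<close>)
  ultimately have "\<not> w t' + wsum w (rank_prefix w Y' x) < 3/2 * B"
    using rejected by linarith
  then show "x \<in> Y' - ch w B Y'"
    using x sub \<open>x \<noteq> t'\<close> by (auto simp: mem_ch_iff[OF fin(1) t' nonneg(1)])
qed

lemma ch_remove_rejected:
  fixes w :: "'a::linorder \<Rightarrow> real"
  assumes "finite U" "\<forall>y\<in>U. 0 \<le> w y" "z \<in> U - ch w B U"
  shows "ch w B (U - {z}) = ch w B U"
proof -
  obtain t where t: "rank_max w U t"
    using assms ex_rank_max by blast
  have "z \<noteq> t"
    using assms rank_max_mem_ch[OF assms(1) t] by blast
  then have t': "rank_max w (U - {z}) t"
    using t by (auto simp: rank_max_def)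
  have fin': "finite (U - {z})" and nonneg': "\<forall>y\<in>U - {z}. 0 \<le> w y"
    using assms(1,2) by auto
  have z_rejected: "\<not> w t + wsum w (rank_prefix w U z) < 3/2 * B"
    using assms(3) mem_ch_iff[OF assms(1) t assms(2)] by auto
  have same_test: "w t + wsum w (rank_prefix w (U - {z}) x) < 3/2 * B
      \<longleftrightarrow> w t + wsum w (rank_prefix w U x) < 3/2 * B"
    if x: "x \<in> U - {z}" for x
  proof (cases "rank w x < rank w z")
    case True
    then have "rank_prefix w (U - {z}) x = rank_prefix w U x"
      by (auto simp: rank_prefix_def)
    then show ?thesis by simp
  next
    case False
    \<comment> \<open>then x ranks above the rejected z, and both tests fail\<close>
    then have zx: "rank w z \<le> rank w x"
      by simp
    have "wsum w (rank_prefix w U z) \<le> wsum w (rank_prefix w U x)"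
      by (rule wsum_mono) (use assms(1,2) zx in \<open>auto simp: rank_prefix_def\<close>)
    moreover have "wsum w (rank_prefix w U z) \<le> wsum w (rank_prefix w (U - {z}) x)"
    proof -
      have "wsum w (rank_prefix w U z) = w z + wsum w (rank_prefix w U z - {z})"
        using assms by (intro wsum_remove) (auto simp: rank_prefix_def)
      also have "\<dots> \<le> w x + wsum w (rank_prefix w (U - {z}) x - {x})"
      proof (rule add_mono)
        show "w z \<le> w x"
          using zx by (rule wage_le_if_rank_le)
        show "wsum w (rank_prefix w U z - {z}) \<le> wsum w (rank_prefix w (U - {z}) x - {x})"
          by (rule wsum_mono)
            (use assms(1,2) x zx in \<open>auto simp: rank_prefix_def order_less_le\<close>)
      qed
      also have "\<dots> = wsum w (rank_prefix w (U - {z}) x)"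
        using assms(1) x by (intro wsum_remove[symmetric]) (auto simp: rank_prefix_def)
      finally show ?thesis .
    qed
    ultimately show ?thesis
      using z_rejected by linarith
  qed
  show ?thesis
  proof (intro set_eqI)
    fix x
    show "x \<in> ch w B (U - {z}) \<longleftrightarrow> x \<in> ch w B U"
      using same_test[of x] z_rejected
      by (auto simp: mem_ch_iff[OF fin' t' nonneg'] mem_ch_iff[OF assms(1) t assms(2)])
  qed
qed

lemma IRC_if_remove_rejected:
  assumes "finite X" "\<And>U z. U \<subseteq> X \<Longrightarrow> z \<in> U - C U \<Longrightarrow> C (U - {z}) = C U"
  shows "IRC X C"
  unfolding IRC_def
proof (intro allI impI)
  fix Y' Y''
  assume Y: "Y' \<subseteq> X \<and> Y'' \<subseteq> X - Y' \<and> C (Y' \<union> Y'') \<subseteq> Y'"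
  have "C Y' = C (Y' \<union> F)" if "finite F" "F \<subseteq> X - Y'" "C (Y' \<union> F) \<subseteq> Y'" for F
    using that
  proof (induction F rule: finite_induct)
    case empty
    then show ?case by simp
  next
    case (insert z F)
    have "Y' \<union> insert z F - {z} = Y' \<union> F"
      using insert.hyps(2) insert.prems(1) by auto
    moreover have "C (Y' \<union> insert z F - {z}) = C (Y' \<union> insert z F)"
      using insert.prems Y by (intro assms(2)) auto
    ultimately show ?case
      using insert.IH insert.prems by simp
  qed
  moreover have "finite Y''"
    using Y assms(1) finite_subset by blast
  ultimately show "C Y' = C (Y' \<union> Y'')"
    using Y by blast
qed

lemma IRC_ch:
  fixes w :: "'a::linorder \<Rightarrow> real"
  assumes "finite X" "\<forall>x\<in>X. 0 \<le> w x"
  shows "IRC X (ch w B)"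
proof (rule IRC_if_remove_rejected[OF assms(1)])
  fix U z
  assume "U \<subseteq> X" "z \<in> U - ch w B U"
  then show "ch w B (U - {z}) = ch w B U"
    using assms by (intro ch_remove_rejected) (auto intro: finite_subset)
qed

lemma wsum_heavy_le:
  assumes "finite S" "\<forall>y\<in>S. 0 \<le> w y \<and> w y \<le> m" "0 \<le> m" "wsum w S \<le> B"
  shows "wsum w {y \<in> S. B/2 < w y} \<le> m"
proof (cases "{y \<in> S. B/2 < w y} = {}")
  case True
  then show ?thesis
    using assms(3) by (simp only: wsum_def sum.empty)
next
  case False
  then obtain a where a: "a \<in> S" "B/2 < w a"
    by blast
  have "{y \<in> S. B/2 < w y} = {a}"
  proof (rule ccontr)
    assume "{y \<in> S. B/2 < w y} \<noteq> {a}"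
    then obtain b where b: "b \<in> S" "B/2 < w b" "b \<noteq> a"
      using a by blast
    have "w a + w b = wsum w {a, b}"
      using b(3) by (simp add: wsum_def)
    also have "\<dots> \<le> wsum w S"
      using assms(1,2) a b by (intro wsum_mono) auto
    finally show False
      using assms(4) a(2) b(2) by linarith
  qed
  then show ?thesis
    using a assms(2) by (simp add: wsum_def)
qed

lemma wsum_le_wsum_if_covers_light:
  assumes "finite S" "finite C" "t \<in> C" "\<forall>y\<in>S \<union> C. 0 \<le> w y" "\<forall>y\<in>S. w y \<le> w t"
    and "wsum w S \<le> B" "{y \<in> S. w y \<le> B/2} \<subseteq> C - {t}"
  shows "wsum w S \<le> wsum w C"
proof -
  have "S = {y \<in> S. w y \<le> B/2} \<union> {y \<in> S. B/2 < w y}"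
    by auto
  moreover have "wsum w ({y \<in> S. w y \<le> B/2} \<union> {y \<in> S. B/2 < w y})
      = wsum w {y \<in> S. w y \<le> B/2} + wsum w {y \<in> S. B/2 < w y}"
    unfolding wsum_def by (rule sum.union_disjoint) (use assms(1) in auto)
  ultimately have "wsum w S = wsum w {y \<in> S. w y \<le> B/2} + wsum w {y \<in> S. B/2 < w y}"
    by simp
  also have "\<dots> \<le> wsum w (C - {t}) + w t"
  proof (rule add_mono)
    show "wsum w {y \<in> S. w y \<le> B/2} \<le> wsum w (C - {t})"
      using assms(2,4,7) by (intro wsum_mono) auto
    show "wsum w {y \<in> S. B/2 < w y} \<le> w t"
      using assms(1,3-6) by (intro wsum_heavy_le) auto
  qed
  also have "\<dots> = wsum w C"
    using assms(2,3) by (simp add: wsum_remove)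
  finally show ?thesis .
qed

lemma rejected_wage_gt_half:
  fixes w :: "'a::linorder \<Rightarrow> real"
  assumes "finite Y" "\<forall>y\<in>Y. 0 \<le> w y" "rank_max w Y t" "wsum w (ch w B Y) < B"
    and "z \<in> Y - ch w B Y" "\<And>y. y \<in> Y \<Longrightarrow> rank w y < rank w z \<Longrightarrow> y \<in> ch w B Y"
  shows "B/2 < w z"
proof -
  have ch_sub: "ch w B Y \<subseteq> Y"
    using assms(1,2) by (rule ch_subset)
  have t_ch: "t \<in> ch w B Y"
    using assms(1,3,2) by (rule rank_max_mem_ch)
  have below_z: "rank_prefix w Y z - {z} \<subseteq> ch w B Y - {t}"
    using assms(3,5,6) t_ch
    by (force simp: rank_prefix_def rank_max_def order_less_le dest: order_antisym)
  have "3/2 * B \<le> w t + wsum w (rank_prefix w Y z)"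
    using assms(5) mem_ch_iff[OF assms(1,3,2)] by auto
  also have "\<dots> = w t + w z + wsum w (rank_prefix w Y z - {z})"
    using assms(1,5) by (simp add: wsum_remove rank_prefix_def)
  also have "\<dots> \<le> w t + w z + wsum w (ch w B Y - {t})"
    using below_z assms(1,2) ch_sub finite_subset[OF ch_sub]
    by (simp add: wsum_mono subset_iff)
  also have "\<dots> = w z + wsum w (ch w B Y)"
    using finite_subset[OF ch_sub assms(1)] t_ch by (simp add: wsum_remove)
  finally show ?thesis
    using assms(4) by linarith
qed

lemma wsum_le_wsum_ch:
  fixes w :: "'a::linorder \<Rightarrow> real"
  assumes "finite Y" "\<forall>y\<in>Y. 0 \<le> w y" "Y'' \<subseteq> Y"
    and "wsum w Y'' \<le> max B (wsum w (ch w B Y))"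
  shows "wsum w Y'' \<le> wsum w (ch w B Y)"
proof -
  have ch_sub: "ch w B Y \<subseteq> Y"
    using assms(1,2) by (rule ch_subset)
  consider "B \<le> wsum w (ch w B Y)" | "ch w B Y = Y" | "wsum w (ch w B Y) < B" "ch w B Y \<noteq> Y"
    by linarith
  then show ?thesis
  proof cases
    case 1
    then show ?thesis using assms(4) by simp
  next
    case 2
    then show ?thesis using assms(1-3) wsum_mono by metis
  next
    case 3
    have "Y \<noteq> {}"
      using 3(2) by (auto simp: ch_def)
    then obtain t where t: "rank_max w Y t"
      using assms(1) ex_rank_max by blast
    obtain z where z: "z \<in> Y - ch w B Y" "\<forall>y\<in>Y - ch w B Y. rank w z \<le> rank w y"
      using ex_rank_min[of "Y - ch w B Y" w] assms(1) ch_sub 3(2) by blast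
    have accepted_below: "y \<in> ch w B Y - {t}" if "y \<in> Y" "rank w y < rank w z" for y
      using that z t by (auto simp: rank_max_def not_le[symmetric])
    have heavy_z: "B/2 < w z"
      using assms(1,2) t 3(1) z(1) by (rule rejected_wage_gt_half) (use accepted_below in blast)
    have light: "{y \<in> Y''. w y \<le> B/2} \<subseteq> ch w B Y - {t}"
    proof
      fix y
      assume "y \<in> {y \<in> Y''. w y \<le> B/2}"
      then have "y \<in> Y" "w y < w z"
        using assms(3) heavy_z by auto
      then show "y \<in> ch w B Y - {t}"
        using accepted_below rank_less_if_wage_less by blast
    qed
    have "finite Y''" "finite (ch w B Y)"
      using assms(1,3) ch_sub finite_subset by blast+
    moreover have "t \<in> ch w B Y"
      using assms(1) t assms(2) by (rule rank_max_mem_ch)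
    moreover have "\<forall>y\<in>Y'' \<union> ch w B Y. 0 \<le> w y" "\<forall>y\<in>Y''. w y \<le> w t"
      using assms(2,3) ch_sub t by (auto simp: rank_max_def wage_le_if_rank_le)
    moreover have "wsum w Y'' \<le> B"
      using assms(4) 3(1) by simp
    ultimately show ?thesis
      using light by (rule wsum_le_wsum_if_covers_light)
  qed
qed

lemma COM_ch:
  fixes w :: "'a::linorder \<Rightarrow> real"
  assumes "finite X" "\<forall>x\<in>X. 0 \<le> w x" "0 \<le> \<gamma>" "\<forall>Y\<subseteq>X. f Y = \<gamma> * wsum w Y"
  shows "COM X B w f (ch w B)"
  unfolding COM_def
proof (intro allI impI)
  fix Y' Y''
  assume Y: "Y'' \<subseteq> Y' \<and> Y' \<subseteq> X \<and> wsum w Y'' \<le> max B (wsum w (ch w B Y'))"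
  have fin: "finite Y'" and nonneg: "\<forall>y\<in>Y'. 0 \<le> w y"
    using Y assms(1,2) finite_subset by blast+
  have "wsum w Y'' \<le> wsum w (ch w B Y')"
    using fin nonneg Y by (intro wsum_le_wsum_ch) auto
  moreover have "ch w B Y' \<subseteq> X"
    using ch_subset[OF fin nonneg] Y by blast
  moreover have "Y'' \<subseteq> X"
    using Y by blast
  ultimately show "f Y'' \<le> f (ch w B Y')"
    using assms(3,4) by (simp add: mult_left_mono)
qed

theorem lemma7:
  fixes X :: "'a::linorder set" and w :: "'a \<Rightarrow> real" and B \<gamma> :: real
    and f :: "'a set \<Rightarrow> real"
  assumes "finite X"
    and "B > 0"
    and "\<forall>x\<in>X. 0 < w x \<and> w x \<le> B"
    and "\<gamma> > 0"
    and "\<forall>Y\<subseteq>X. f Y = \<gamma> * wsum w Y"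
  shows "SUB X (ch w B) \<and> IRC X (ch w B) \<and> COM X B w f (ch w B)"
proof -
  \<comment> \<open>only non-negativity of the wages is needed\<close>
  have nonneg: "\<forall>x\<in>X. 0 \<le> w x"
    using assms(3) by auto
  show ?thesis
    using SUB_ch[OF assms(1) nonneg] IRC_ch[OF assms(1) nonneg]
      COM_ch[OF assms(1) nonneg _ assms(5)] assms(4) by simp
qed

end
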